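(* (1) Let $f\colon Z\to X$ be a fibration, with basepoints $\dagger\in Z$, $*\in X$. Then the biset of $f$ can be described as \[B(f)=\{\beta\colon[0,1]\to Z\mid\beta(0)=\dagger,\ f(\beta(1))=*\}/{\sim},\] where $\beta\sim\beta'$ if and only if there is a path $\varepsilon\colon[0,1]\to f^{-1}( * )$ from $\beta(1)$ to $\beta'(1)$ such that $\beta\#\varepsilon$ is homotopic (rel endpoints) to $\beta'$. (2) Let $(Z,f,i)$ be a correspondence from $Y$ to $X$ with $f$ fibrant and basepoints $\dagger\in Y$, $*\in X$. Then in the triple description of $B(f,i)$ one may assume that $\gamma$ is constant, and \[B(f,i)=\{(\delta\colon[0,1]\to Y,\ p\in Z)\mid\delta(0)=\dagger,\ \delta(1)=i(p),\ f(p)=*\}/{\sim},\] where $(\delta,p)\sim(\delta',p')$ if and only if there is a path $\varepsilon\colon[0,1]\to f^{-1}( * )$ from $p$ to $p'$ such that $\delta\#i(\varepsilon)$ is homotopic to $\delta'$.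
   Context: For a continuous map $f\colon Z\to X$ and basepoints $\dagger\in Z$, $*\in X$, the biset $B(f)=B(f,\dagger,* )$ is the set of homotopy classes rel endpoints of paths $\gamma$ in $X$ from $f(\dagger)$ to $*$, a $\pi_1(Z,\dagger)$-$\pi_1(X,* )$-biset via $[\lambda]\cdot[\gamma]=[f\circ\lambda\#\gamma]$ and $[\gamma]\cdot[\mu]=[\gamma\#\mu]$. For a correspondence $(Z,f,i)$ from $Y$ to $X$ ($f\colon Z\to X$, $i\colon Z\to Y$), $B(f,i)$ is the set of triples $(\delta,p,\gamma)$ with $p\in Z$, $\delta$ a path in $Y$ from $\dagger$ to $i(p)$, $\gamma$ a path in $X$ from $f(p)$ to $*$, modulo homotopy of triples (with $p$ moving continuously, outer endpoints fixed). A fibration is a map with the homotopy lifting property with respect to all spaces. $\#$ denotes concatenation of paths. *)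

theory Defs
  imports "HOL-Analysis.Analysis"
begin

abbreviation unitI :: "real topology" where
  "unitI \<equiv> top_of_set {0..1}"

text \<open>Concatenation of paths (the library's joinpaths needs a type class; here the
  same formula for paths in abstract topological spaces).\<close>
definition pjoin :: "(real \<Rightarrow> 'a) \<Rightarrow> (real \<Rightarrow> 'a) \<Rightarrow> real \<Rightarrow> 'a" (infixr \<open>#\<^sub>p\<close> 75) where
  "g1 #\<^sub>p g2 = (\<lambda>x. if x \<le> 1/2 then g1 (2 * x) else g2 (2 * x - 1))"

definition homotopic_rel_ends :: "'a topology \<Rightarrow> (real \<Rightarrow> 'a) \<Rightarrow> (real \<Rightarrow> 'a) \<Rightarrow> bool" where
  "homotopic_rel_ends X p q \<longleftrightarrow>
     homotopic_with (\<lambda>r. r 0 = p 0 \<and> r 1 = p 1) unitI X p q"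

definition HLP_wrt :: "'w topology \<Rightarrow> 'z topology \<Rightarrow> 'x topology \<Rightarrow> ('z \<Rightarrow> 'x) \<Rightarrow> bool" where
  "HLP_wrt W Z X f \<longleftrightarrow>
    (\<forall>g h. continuous_map W Z g \<and>
           continuous_map (prod_topology W unitI) X h \<and>
           (\<forall>w\<in>topspace W. h (w, 0) = f (g w))
       \<longrightarrow> (\<exists>H. continuous_map (prod_topology W unitI) Z H \<and>
               (\<forall>w\<in>topspace W. H (w, 0) = g w) \<and>
               (\<forall>y\<in>topspace (prod_topology W unitI). f (H y) = h y)))"

text \<open>Fibration: homotopy lifting property with respect to all spaces.  Spaces are
  taken with carrier in the (large) universe type real set.\<close>
definition fibration :: "'z topology \<Rightarrow> 'x topology \<Rightarrow> ('z \<Rightarrow> 'x) \<Rightarrow> bool" where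
  "fibration Z X f \<longleftrightarrow> continuous_map Z X f \<and> (\<forall>W :: real set topology. HLP_wrt W Z X f)"

definition Bpaths :: "'x topology \<Rightarrow> ('z \<Rightarrow> 'x) \<Rightarrow> 'z \<Rightarrow> 'x \<Rightarrow> (real \<Rightarrow> 'x) set" where
  "Bpaths X f dag star = {\<gamma>. pathin X \<gamma> \<and> \<gamma> 0 = f dag \<and> \<gamma> 1 = star}"

definition path_htp_rel :: "'x topology \<Rightarrow> (real \<Rightarrow> 'x) set \<Rightarrow> ((real \<Rightarrow> 'x) \<times> (real \<Rightarrow> 'x)) set" where
  "path_htp_rel X P = {(\<gamma>, \<gamma>'). \<gamma> \<in> P \<and> \<gamma>' \<in> P \<and> homotopic_rel_ends X \<gamma> \<gamma>'}"

definition biset :: "'x topology \<Rightarrow> ('z \<Rightarrow> 'x) \<Rightarrow> 'z \<Rightarrow> 'x \<Rightarrow> (real \<Rightarrow> 'x) set set" where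
  "biset X f dag star = Bpaths X f dag star // path_htp_rel X (Bpaths X f dag star)"

definition fib_paths :: "'z topology \<Rightarrow> ('z \<Rightarrow> 'x) \<Rightarrow> 'z \<Rightarrow> 'x \<Rightarrow> (real \<Rightarrow> 'z) set" where
  "fib_paths Z f dag star = {\<beta>. pathin Z \<beta> \<and> \<beta> 0 = dag \<and> f (\<beta> 1) = star}"

definition fib_rel :: "'z topology \<Rightarrow> ('z \<Rightarrow> 'x) \<Rightarrow> 'z \<Rightarrow> 'x \<Rightarrow> ((real \<Rightarrow> 'z) \<times> (real \<Rightarrow> 'z)) set" where
  "fib_rel Z f dag star =
     {(\<beta>, \<beta>'). \<beta> \<in> fib_paths Z f dag star \<and> \<beta>' \<in> fib_paths Z f dag star \<and>
        (\<exists>\<epsilon>. pathin (subtopology Z {z. f z = star}) \<epsilon> \<and> \<epsilon> 0 = \<beta> 1 \<and> \<epsilon> 1 = \<beta>' 1 \<and>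
             homotopic_rel_ends Z (\<beta> #\<^sub>p \<epsilon>) \<beta>')}"

definition triples ::
  "'y topology \<Rightarrow> 'z topology \<Rightarrow> 'x topology \<Rightarrow> ('z \<Rightarrow> 'x) \<Rightarrow> ('z \<Rightarrow> 'y) \<Rightarrow> 'y \<Rightarrow> 'x
   \<Rightarrow> ((real \<Rightarrow> 'y) \<times> 'z \<times> (real \<Rightarrow> 'x)) set" where
  "triples Y Z X f i dag star =
     {(\<delta>, p, \<gamma>). p \<in> topspace Z \<and> pathin Y \<delta> \<and> \<delta> 0 = dag \<and> \<delta> 1 = i p \<and>
                 pathin X \<gamma> \<and> \<gamma> 0 = f p \<and> \<gamma> 1 = star}"

definition triple_rel ::
  "'y topology \<Rightarrow> 'z topology \<Rightarrow> 'x topology \<Rightarrow> ('z \<Rightarrow> 'x) \<Rightarrow> ('z \<Rightarrow> 'y) \<Rightarrow> 'y \<Rightarrow> 'x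
   \<Rightarrow> (((real \<Rightarrow> 'y) \<times> 'z \<times> (real \<Rightarrow> 'x)) \<times> ((real \<Rightarrow> 'y) \<times> 'z \<times> (real \<Rightarrow> 'x))) set" where
  "triple_rel Y Z X f i dag star =
     {((\<delta>, p, \<gamma>), (\<delta>', p', \<gamma>')).
        (\<delta>, p, \<gamma>) \<in> triples Y Z X f i dag star \<and> (\<delta>', p', \<gamma>') \<in> triples Y Z X f i dag star \<and>
        (\<exists>D P G. continuous_map (prod_topology unitI unitI) Y D \<and>
                 pathin Z P \<and>
                 continuous_map (prod_topology unitI unitI) X G \<and>
                 P 0 = p \<and> P 1 = p' \<and>
                 (\<forall>s\<in>{0..1}. D (s, 0) = \<delta> s \<and> D (s, 1) = \<delta>' s \<and>
                              G (s, 0) = \<gamma> s \<and> G (s, 1) = \<gamma>' s) \<and>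
                 (\<forall>t\<in>{0..1}. D (0, t) = dag \<and> D (1, t) = i (P t) \<and>
                              G (0, t) = f (P t) \<and> G (1, t) = star))}"

definition biset_corr ::
  "'y topology \<Rightarrow> 'z topology \<Rightarrow> 'x topology \<Rightarrow> ('z \<Rightarrow> 'x) \<Rightarrow> ('z \<Rightarrow> 'y) \<Rightarrow> 'y \<Rightarrow> 'x
   \<Rightarrow> ((real \<Rightarrow> 'y) \<times> 'z \<times> (real \<Rightarrow> 'x)) set set" where
  "biset_corr Y Z X f i dag star =
     triples Y Z X f i dag star // triple_rel Y Z X f i dag star"

definition red_pairs ::
  "'y topology \<Rightarrow> 'z topology \<Rightarrow> ('z \<Rightarrow> 'x) \<Rightarrow> ('z \<Rightarrow> 'y) \<Rightarrow> 'y \<Rightarrow> 'x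
   \<Rightarrow> ((real \<Rightarrow> 'y) \<times> 'z) set" where
  "red_pairs Y Z f i dag star =
     {(\<delta>, p). p \<in> topspace Z \<and> pathin Y \<delta> \<and> \<delta> 0 = dag \<and> \<delta> 1 = i p \<and> f p = star}"

definition red_rel ::
  "'y topology \<Rightarrow> 'z topology \<Rightarrow> ('z \<Rightarrow> 'x) \<Rightarrow> ('z \<Rightarrow> 'y) \<Rightarrow> 'y \<Rightarrow> 'x
   \<Rightarrow> (((real \<Rightarrow> 'y) \<times> 'z) \<times> ((real \<Rightarrow> 'y) \<times> 'z)) set" where
  "red_rel Y Z f i dag star =
     {((\<delta>, p), (\<delta>', p')).
        (\<delta>, p) \<in> red_pairs Y Z f i dag star \<and> (\<delta>', p') \<in> red_pairs Y Z f i dag star \<and>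
        (\<exists>\<epsilon>. pathin (subtopology Z {z. f z = star}) \<epsilon> \<and> \<epsilon> 0 = p \<and> \<epsilon> 1 = p' \<and>
             homotopic_rel_ends Y (\<delta> #\<^sub>p (i \<circ> \<epsilon>)) \<delta>')}"

end

theory Submission
  imports Defs
begin

text \<open>(1) Every path from \<open>f(dag)\<close> to \<open>star\<close> lifts to a path from \<open>dag\<close> ending in the fibre.
  Two such lifts \<open>\<beta>, \<beta>'\<close> have homotopic images exactly when \<open>\<beta>'\<close> is homotopic to \<open>\<beta>\<close> followed by
  a path in the fibre: the image of \<open>\<beta>\<^sup>-\<^sup>1 # \<beta>'\<close> is null-homotopic rel endpoints, and lifting the
  null-homotopy deforms \<open>\<beta>\<^sup>-\<^sup>1 # \<beta>'\<close> into the fibre.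

  (2) Lifting \<open>\<gamma>\<close> to a path \<open>\<epsilon>\<close> from \<open>p\<close> and sliding the middle point along \<open>\<epsilon>\<close> turns
  \<open>(\<delta>, p, \<gamma>)\<close> into \<open>(\<delta> # i(\<epsilon>), \<epsilon>(1), constant)\<close>. Conversely, in a homotopy between triples
  with constant last paths the track of the middle point has null-homotopic image, so it can be
  pushed into the fibre, as in (1).\<close>

section \<open>Paths and homotopies rel endpoints in arbitrary spaces\<close>

abbreviation unit_square :: "(real \<times> real) set" where
  "unit_square \<equiv> {0..1} \<times> {0..1}"

abbreviation (input) reverse_path :: "(real \<Rightarrow> 'a) \<Rightarrow> real \<Rightarrow> 'a" where
  "reverse_path g \<equiv> \<lambda>x. g (1 - x)"

lemma continuous_map_compose_top_of_set:
  assumes "continuous_map (top_of_set T) Z H" "continuous_on S a" "a ` S \<subseteq> T"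
  shows "continuous_map (top_of_set S) Z (\<lambda>x. H (a x))"
proof -
  have "continuous_map (top_of_set S) (top_of_set T) a"
    using assms(2,3) by (auto simp: continuous_map_in_subtopology)
  from continuous_map_compose[OF this assms(1)] show ?thesis by (simp add: o_def)
qed

lemma continuous_map_square_stack:
  assumes D1: "continuous_map (top_of_set unit_square) W D1"
    and D2: "continuous_map (top_of_set unit_square) W D2"
    and glue: "\<And>s. s \<in> {0..1} \<Longrightarrow> D1 (s, 1) = D2 (s, 0)"
  shows "continuous_map (top_of_set unit_square) W
           (\<lambda>y. if snd y \<le> 1/2 then D1 (fst y, 2 * snd y) else D2 (fst y, 2 * snd y - 1))"
proof (rule continuous_map_cases_le)
  show "continuous_map (subtopology (top_of_set unit_square) {y \<in> topspace (top_of_set unit_square). snd y \<le> 1/2})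
          W (\<lambda>y. D1 (fst y, 2 * snd y))"
    unfolding subtopology_subtopology
    by (rule continuous_map_compose_top_of_set[OF D1]) (auto intro!: continuous_intros)
  show "continuous_map (subtopology (top_of_set unit_square) {y \<in> topspace (top_of_set unit_square). 1/2 \<le> snd y})
          W (\<lambda>y. D2 (fst y, 2 * snd y - 1))"
    unfolding subtopology_subtopology
    by (rule continuous_map_compose_top_of_set[OF D2]) (auto intro!: continuous_intros)
  show "D1 (fst y, 2 * snd y) = D2 (fst y, 2 * snd y - 1)"
    if "y \<in> topspace (top_of_set unit_square)" "snd y = 1/2" for y
    using that glue[of "fst y"] by (auto simp: mult.commute)
qed (auto intro!: continuous_intros continuous_map_into_fulltopology[OF continuous_map_snd]
      simp flip: prod_topology_subtopology_eu)

lemma homotopic_rel_ends_iff: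
  "homotopic_rel_ends Z p q \<longleftrightarrow>
     (\<exists>h. continuous_map (top_of_set unit_square) Z h \<and>
          (\<forall>x\<in>{0..1}. h (0, x) = p x) \<and> (\<forall>x\<in>{0..1}. h (1, x) = q x) \<and>
          (\<forall>t\<in>{0..1}. h (t, 0) = p 0 \<and> h (t, 1) = p 1))"
  unfolding homotopic_rel_ends_def by (subst homotopic_with) auto

lemma homotopic_rel_ends_imp_pathin:
  "homotopic_rel_ends Z p q \<Longrightarrow> pathin Z p \<and> pathin Z q"
  unfolding homotopic_rel_ends_def pathin_def by (rule homotopic_with_imp_continuous_maps)

lemma homotopic_rel_ends_endpoints:
  "homotopic_rel_ends Z p q \<Longrightarrow> q 0 = p 0 \<and> q 1 = p 1"
  unfolding homotopic_rel_ends_def by (drule homotopic_with_imp_property) simp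

lemma homotopic_rel_ends_refl: "pathin Z p \<Longrightarrow> homotopic_rel_ends Z p p"
  unfolding homotopic_rel_ends_def pathin_def by simp

lemma homotopic_rel_ends_sym:
  assumes "homotopic_rel_ends Z p q" shows "homotopic_rel_ends Z q p"
  using homotopic_with_symD[OF assms[unfolded homotopic_rel_ends_def]] homotopic_rel_ends_endpoints[OF assms]
  unfolding homotopic_rel_ends_def by simp

lemma homotopic_rel_ends_trans [trans]:
  assumes "homotopic_rel_ends Z p q" "homotopic_rel_ends Z q r" shows "homotopic_rel_ends Z p r"
proof -
  have "q 0 = p 0" "q 1 = p 1" using homotopic_rel_ends_endpoints[OF assms(1)] by auto
  with assms show ?thesis
    unfolding homotopic_rel_ends_def by (simp add: homotopic_with_trans[of _ _ _ p q r])
qed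

lemma homotopic_rel_ends_compose:
  assumes "homotopic_rel_ends Z p q" "continuous_map Z Y k"
  shows "homotopic_rel_ends Y (k \<circ> p) (k \<circ> q)"
  unfolding homotopic_rel_ends_def
  by (rule homotopic_with_compose_continuous_map_left[OF assms[unfolded homotopic_rel_ends_def]]) auto

lemma homotopic_rel_ends_cong:
  assumes "homotopic_rel_ends Z p q"
    and "\<And>x. x \<in> {0..1} \<Longrightarrow> p' x = p x" "\<And>x. x \<in> {0..1} \<Longrightarrow> q' x = q x"
  shows "homotopic_rel_ends Z p' q'"
proof -
  obtain h where h: "continuous_map (top_of_set unit_square) Z h"
    "\<forall>x\<in>{0..1}. h (0, x) = p x" "\<forall>x\<in>{0..1}. h (1, x) = q x"
    "\<forall>t\<in>{0..1}. h (t, 0) = p 0 \<and> h (t, 1) = p 1"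
    using assms(1) unfolding homotopic_rel_ends_iff by blast
  show ?thesis
    unfolding homotopic_rel_ends_iff using h assms(2,3) by (intro exI[of _ h]) auto
qed

lemma homotopic_rel_ends_convex_reparam:
  fixes a b :: "real \<Rightarrow> 'v::real_normed_vector"
  assumes S: "convex S" and Q: "continuous_map (top_of_set S) Z Q"
    and a: "pathin (top_of_set S) a" and b: "pathin (top_of_set S) b"
    and ends: "a 0 = b 0" "a 1 = b 1"
  shows "homotopic_rel_ends Z (Q \<circ> a) (Q \<circ> b)"
  unfolding homotopic_rel_ends_iff
proof (intro exI conjI ballI)
  let ?h = "\<lambda>y. Q ((1 - fst y) *\<^sub>R a (snd y) + fst y *\<^sub>R b (snd y))"
  have ca: "continuous_on {0..1} a" and aS: "a ` {0..1} \<subseteq> S"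
    and cb: "continuous_on {0..1} b" and bS: "b ` {0..1} \<subseteq> S"
    using a b by (auto simp: pathin_canon_iff path_def)
  show "continuous_map (top_of_set unit_square) Z ?h"
  proof (rule continuous_map_compose_top_of_set[OF Q])
    show "continuous_on unit_square (\<lambda>y. (1 - fst y) *\<^sub>R a (snd y) + fst y *\<^sub>R b (snd y))"
      by (intro continuous_intros continuous_on_compose2[OF ca] continuous_on_compose2[OF cb]) auto
    show "(\<lambda>y. (1 - fst y) *\<^sub>R a (snd y) + fst y *\<^sub>R b (snd y)) ` unit_square \<subseteq> S"
      using aS bS by (auto intro!: convexD_alt[OF S])
  qed
qed (use ends in auto)

lemma homotopic_rel_ends_reparam:
  assumes r: "pathin Z r"
    and a: "continuous_on {0..1} a" "a ` {0..1} \<subseteq> {0..1}"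
    and b: "continuous_on {0..1} b" "b ` {0..1} \<subseteq> {0..1}"
    and ends: "a 0 = b 0" "a 1 = b 1"
    and p: "\<And>x. x \<in> {0..1} \<Longrightarrow> p x = r (a x)" and q: "\<And>x. x \<in> {0..1} \<Longrightarrow> q x = r (b x)"
  shows "homotopic_rel_ends Z p q"
proof (rule homotopic_rel_ends_cong[OF homotopic_rel_ends_convex_reparam[where S="{0..1}"]])
  show "continuous_map (top_of_set {0..1}) Z r" using r unfolding pathin_def .
qed (use a b ends p q in \<open>auto simp: pathin_canon_iff path_def\<close>)

lemma pjoin_0 [simp]: "(p #\<^sub>p q) 0 = p 0"
  and pjoin_1 [simp]: "(p #\<^sub>p q) 1 = q 1"
  by (simp_all add: pjoin_def)

lemma pjoin_compose: "k \<circ> (p #\<^sub>p q) = (k \<circ> p) #\<^sub>p (k \<circ> q)"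
  by (auto simp: fun_eq_iff pjoin_def)

lemma pathin_pjoin:
  assumes p: "pathin Z p" and q: "pathin Z q" and e: "p 1 = q 0"
  shows "pathin Z (p #\<^sub>p q)"
  unfolding pathin_def pjoin_def
proof (rule continuous_map_cases_le)
  show "continuous_map (subtopology unitI {x \<in> topspace unitI. x \<le> 1/2}) Z (\<lambda>x. p (2 * x))"
    using p unfolding pathin_def subtopology_subtopology
    by (rule continuous_map_compose_top_of_set) (auto intro!: continuous_intros)
  show "continuous_map (subtopology unitI {x \<in> topspace unitI. 1/2 \<le> x}) Z (\<lambda>x. q (2 * x - 1))"
    using q unfolding pathin_def subtopology_subtopology
    by (rule continuous_map_compose_top_of_set) (auto intro!: continuous_intros)
  show "p (2 * x) = q (2 * x - 1)" if "x \<in> topspace unitI" "x = 1/2" for x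
  proof -
    have "2 * x = 1" "2 * x - 1 = 0" using that(2) by simp_all
    then show ?thesis using e by simp
  qed
qed (auto intro!: continuous_intros continuous_map_into_fulltopology[OF continuous_map_id])

lemma pathin_reverse: "pathin Z p \<Longrightarrow> pathin Z (reverse_path p)"
  unfolding pathin_def by (rule continuous_map_compose_top_of_set) (auto intro!: continuous_intros)

lemma homotopic_rel_ends_pjoin:
  assumes hp: "homotopic_rel_ends Z p p'" and hq: "homotopic_rel_ends Z q q'" and e: "p 1 = q 0"
  shows "homotopic_rel_ends Z (p #\<^sub>p q) (p' #\<^sub>p q')"
proof -
  obtain h where h: "continuous_map (top_of_set unit_square) Z h"
    "\<forall>x\<in>{0..1}. h (0, x) = p x" "\<forall>x\<in>{0..1}. h (1, x) = p' x"
    "\<forall>t\<in>{0..1}. h (t, 0) = p 0 \<and> h (t, 1) = p 1"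
    using hp unfolding homotopic_rel_ends_iff by blast
  obtain k where k: "continuous_map (top_of_set unit_square) Z k"
    "\<forall>x\<in>{0..1}. k (0, x) = q x" "\<forall>x\<in>{0..1}. k (1, x) = q' x"
    "\<forall>t\<in>{0..1}. k (t, 0) = q 0 \<and> k (t, 1) = q 1"
    using hq unfolding homotopic_rel_ends_iff by blast
  define H where "H = (\<lambda>y. if snd y \<le> 1/2 then h (fst y, 2 * snd y) else k (fst y, 2 * snd y - 1))"
  have "continuous_map (top_of_set unit_square) Z H"
    unfolding H_def by (rule continuous_map_square_stack[OF h(1) k(1)]) (use h(4) k(4) e in auto)
  then show ?thesis
    unfolding homotopic_rel_ends_iff
    by (intro exI[of _ H] conjI ballI) (use h k in \<open>auto simp: pjoin_def H_def\<close>)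
qed

lemma homotopic_rel_ends_pjoin_const:
  assumes p: "pathin Z p" and e: "\<And>x. x \<in> {0..1} \<Longrightarrow> e x = p 1"
  shows "homotopic_rel_ends Z (p #\<^sub>p e) p"
proof (rule homotopic_rel_ends_reparam[OF p, where a="\<lambda>x. min (2 * x) 1" and b="\<lambda>x. x"])
  show "(p #\<^sub>p e) x = p (min (2 * x) 1)" if "x \<in> {0..1}" for x
    using that e[of "2 * x - 1"] by (auto simp: pjoin_def)
qed (auto intro!: continuous_intros)

lemma homotopic_rel_ends_const_pjoin:
  assumes p: "pathin Z p" and e: "\<And>x. x \<in> {0..1} \<Longrightarrow> e x = p 0"
  shows "homotopic_rel_ends Z (e #\<^sub>p p) p"
proof (rule homotopic_rel_ends_reparam[OF p, where a="\<lambda>x. max 0 (2 * x - 1)" and b="\<lambda>x. x"])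
  show "(e #\<^sub>p p) x = p (max 0 (2 * x - 1))" if "x \<in> {0..1}" for x
    using that e[of "2 * x"] by (auto simp: pjoin_def)
qed (auto intro!: continuous_intros)

lemma homotopic_rel_ends_pjoin_assoc:
  assumes a: "pathin Z a" and b: "pathin Z b" and c: "pathin Z c"
    and ab: "a 1 = b 0" and bc: "b 1 = c 0"
  shows "homotopic_rel_ends Z (a #\<^sub>p (b #\<^sub>p c)) ((a #\<^sub>p b) #\<^sub>p c)"
proof (rule homotopic_rel_ends_reparam[where r="(a #\<^sub>p b) #\<^sub>p c"
      and a="\<lambda>x. max (max (x / 2) (x - 1/4)) (2 * x - 1)" and b="\<lambda>x. x"])
  show "pathin Z ((a #\<^sub>p b) #\<^sub>p c)"
    using a b c ab bc by (intro pathin_pjoin) auto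
  show "(a #\<^sub>p (b #\<^sub>p c)) x = ((a #\<^sub>p b) #\<^sub>p c) (max (max (x / 2) (x - 1/4)) (2 * x - 1))"
    if "x \<in> {0..1}" for x :: real
  proof -
    consider "x \<le> 1/2" | "1/2 < x" "x \<le> 3/4" | "3/4 < x" by linarith
    then show ?thesis
    proof cases
      case 1
      then have "max (max (x / 2) (x - 1/4)) (2 * x - 1) = x / 2" by auto
      with 1 show ?thesis by (simp add: pjoin_def)
    next
      case 2
      then have "max (max (x / 2) (x - 1/4)) (2 * x - 1) = x - 1/4" by auto
      moreover have "2 * (2 * (x - 1/4)) - 1 = 2 * (2 * x - 1)" by algebra
      ultimately show ?thesis using 2 by (simp add: pjoin_def)
    next
      case 3
      then have "max (max (x / 2) (x - 1/4)) (2 * x - 1) = 2 * x - 1" by auto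
      with 3 show ?thesis by (simp add: pjoin_def)
    qed
  qed
qed (auto intro!: continuous_intros)

lemma homotopic_rel_ends_pjoin_reverse:
  assumes p: "pathin Z p"
  shows "homotopic_rel_ends Z (p #\<^sub>p reverse_path p) (\<lambda>_. p 0)"
proof (rule homotopic_rel_ends_reparam[OF p, where a="\<lambda>x. 1 - \<bar>2 * x - 1\<bar>" and b="\<lambda>x. 0"])
  show "(p #\<^sub>p reverse_path p) x = p (1 - \<bar>2 * x - 1\<bar>)" if "x \<in> {0..1}" for x :: real
  proof (cases "x \<le> 1/2")
    case True
    then have "1 - \<bar>2 * x - 1\<bar> = 2 * x" by auto
    with True show ?thesis by (simp add: pjoin_def)
  next
    case False
    then have "1 - \<bar>2 * x - 1\<bar> = 1 - (2 * x - 1)" by auto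
    with False show ?thesis by (simp add: pjoin_def)
  qed
qed (auto intro!: continuous_intros)

lemma homotopic_rel_ends_reverse_pjoin:
  assumes p: "pathin Z p"
  shows "homotopic_rel_ends Z (reverse_path p #\<^sub>p p) (\<lambda>_. p 1)"
proof (rule homotopic_rel_ends_reparam[OF p, where a="\<lambda>x. \<bar>2 * x - 1\<bar>" and b="\<lambda>x. 1"])
  show "(reverse_path p #\<^sub>p p) x = p \<bar>2 * x - 1\<bar>" if "x \<in> {0..1}" for x :: real
  proof (cases "x \<le> 1/2")
    case True
    then have "\<bar>2 * x - 1\<bar> = 1 - 2 * x" by auto
    with True show ?thesis by (simp add: pjoin_def)
  next
    case False
    then have "\<bar>2 * x - 1\<bar> = 2 * x - 1" by auto
    with False show ?thesis by (simp add: pjoin_def)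
  qed
qed (auto intro!: continuous_intros)

lemma homotopic_rel_ends_move_pjoin:
  assumes H: "homotopic_rel_ends Z (r #\<^sub>p e) r'"
    and r: "pathin Z r" and e: "pathin Z e" and re: "r 1 = e 0"
  shows "homotopic_rel_ends Z (r' #\<^sub>p reverse_path e) r"
proof -
  have ends: "r' 0 = r 0" "r' 1 = e 1" using homotopic_rel_ends_endpoints[OF H] by auto
  have e': "pathin Z (reverse_path e)" using pathin_reverse[OF e] .
  have "homotopic_rel_ends Z (r' #\<^sub>p reverse_path e) ((r #\<^sub>p e) #\<^sub>p reverse_path e)"
    using homotopic_rel_ends_pjoin[OF homotopic_rel_ends_sym[OF H] homotopic_rel_ends_refl[OF e']] ends
    by simp
  also have "homotopic_rel_ends Z \<dots> (r #\<^sub>p (e #\<^sub>p reverse_path e))"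
    by (rule homotopic_rel_ends_sym[OF homotopic_rel_ends_pjoin_assoc[OF r e e' re]]) simp
  also have "homotopic_rel_ends Z \<dots> (r #\<^sub>p (\<lambda>_. e 0))"
    using homotopic_rel_ends_pjoin[OF homotopic_rel_ends_refl[OF r] homotopic_rel_ends_pjoin_reverse[OF e]] re
    by simp
  also have "homotopic_rel_ends Z \<dots> r"
    by (rule homotopic_rel_ends_pjoin_const[OF r]) (simp add: re)
  finally show ?thesis .
qed

lemma homotopic_rel_ends_pjoin_pjoin_trans:
  assumes H1: "homotopic_rel_ends Z (r #\<^sub>p e) r'" and H2: "homotopic_rel_ends Z (r' #\<^sub>p e') r''"
    and r: "pathin Z r" and e: "pathin Z e" and e': "pathin Z e'"
    and re: "r 1 = e 0" and ee: "e 1 = e' 0"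
  shows "homotopic_rel_ends Z (r #\<^sub>p (e #\<^sub>p e')) r''"
proof -
  have "homotopic_rel_ends Z (r #\<^sub>p (e #\<^sub>p e')) ((r #\<^sub>p e) #\<^sub>p e')"
    by (rule homotopic_rel_ends_pjoin_assoc[OF r e e' re ee])
  also have "homotopic_rel_ends Z \<dots> (r' #\<^sub>p e')"
    by (rule homotopic_rel_ends_pjoin[OF H1 homotopic_rel_ends_refl[OF e']]) (simp add: ee)
  finally show ?thesis using H2 by (rule homotopic_rel_ends_trans)
qed

lemma homotopic_rel_ends_square_boundary:
  assumes D: "continuous_map (top_of_set unit_square) Z D"
  shows "homotopic_rel_ends Z ((\<lambda>s. D (s, 0)) #\<^sub>p (\<lambda>t. D (1, t))) ((\<lambda>t. D (0, t)) #\<^sub>p (\<lambda>s. D (s, 1)))"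
proof -
  have sides: "pathin (top_of_set unit_square) (\<lambda>s. (s, c))" "pathin (top_of_set unit_square) (\<lambda>t. (c, t))"
    if "c \<in> {0..1}" for c :: real
    using that by (auto simp: pathin_canon_iff path_def intro!: continuous_intros)
  have "homotopic_rel_ends Z (D \<circ> ((\<lambda>s. (s, 0)) #\<^sub>p (\<lambda>t. (1, t)))) (D \<circ> ((\<lambda>t. (0, t)) #\<^sub>p (\<lambda>s. (s, 1))))"
    by (intro homotopic_rel_ends_convex_reparam[OF convex_Times[OF convex_real_interval(5) convex_real_interval(5)] D]
        pathin_pjoin sides) auto
  then show ?thesis unfolding pjoin_compose by (simp add: comp_def)
qed

section \<open>Lifting along fibrations\<close>

text \<open>The definition of \<open>fibration\<close> only tests lifting against spaces whose points are sets of
  reals, so the parameter interval is transported there as the space of singletons.\<close>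

lemma fibration_lift_square:
  assumes fib: "fibration Z X f" and g: "pathin Z g"
    and h: "continuous_map (top_of_set unit_square) X h"
    and h0: "\<And>s. s \<in> {0..1} \<Longrightarrow> h (s, 0) = f (g s)"
  shows "\<exists>K. continuous_map (top_of_set unit_square) Z K \<and> (\<forall>s\<in>{0..1}. K (s, 0) = g s) \<and>
             (\<forall>y\<in>unit_square. f (K y) = h y)"
proof -
  define W where "W = pullback_topology ((\<lambda>x::real. {x}) ` {0..1}) the_elem unitI"
  have tW: "topspace W = (\<lambda>x. {x}) ` {0..1}"
    unfolding W_def topspace_pullback_topology by auto
  have HLP: "HLP_wrt W Z X f" using fib unfolding fibration_def by blast
  have elem: "continuous_map W unitI the_elem"
    using continuous_map_pullback[of unitI unitI id _ the_elem] unfolding W_def by simp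
  have single: "continuous_map unitI W (\<lambda>x. {x})"
    unfolding W_def by (rule continuous_map_pullback') (auto simp: o_def)
  have to_square: "continuous_map (prod_topology W unitI) (top_of_set unit_square) (\<lambda>y. (the_elem (fst y), snd y))"
    using continuous_map_compose[OF continuous_map_fst elem] continuous_map_snd
    by (auto simp: continuous_map_pairwise o_def simp flip: prod_topology_subtopology_eu)
  have from_square: "continuous_map (top_of_set unit_square) (prod_topology W unitI) (\<lambda>y. ({fst y}, snd y))"
    using continuous_map_compose[OF continuous_map_fst single] continuous_map_snd
    by (auto simp: continuous_map_pairwise o_def simp flip: prod_topology_subtopology_eu)
  obtain H where H: "continuous_map (prod_topology W unitI) Z H"
    "\<forall>w\<in>topspace W. H (w, 0) = g (the_elem w)"
    "\<forall>y\<in>topspace (prod_topology W unitI). f (H y) = h (the_elem (fst y), snd y)"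
    using HLP[unfolded HLP_wrt_def, rule_format,
        of "g \<circ> the_elem" "\<lambda>y. h (the_elem (fst y), snd y)"]
      continuous_map_compose[OF elem g[unfolded pathin_def]]
      continuous_map_compose[OF to_square h] h0
    by (auto simp: tW o_def)
  show ?thesis
  proof (intro exI[of _ "\<lambda>y. H ({fst y}, snd y)"] conjI ballI)
    show "continuous_map (top_of_set unit_square) Z (\<lambda>y. H ({fst y}, snd y))"
      using continuous_map_compose[OF from_square H(1)] by (simp add: o_def)
    show "H ({fst (s, 0::real)}, snd (s, 0::real)) = g s" if "s \<in> {0..1}" for s
      using H(2) that by (auto simp: tW)
    show "f (H ({fst y}, snd y)) = h y" if "y \<in> unit_square" for y
      using H(3) that by (force simp: tW)
  qed
qed

lemma fibration_lift_path:
  assumes fib: "fibration Z X f" and \<gamma>: "pathin X \<gamma>" and z: "z \<in> topspace Z" and fz: "f z = \<gamma> 0"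
  shows "\<exists>\<beta>. pathin Z \<beta> \<and> \<beta> 0 = z \<and> (\<forall>t\<in>{0..1}. f (\<beta> t) = \<gamma> t)"
proof -
  have h: "continuous_map (top_of_set unit_square) X (\<lambda>y. \<gamma> (snd y))"
    using \<gamma> unfolding pathin_def by (rule continuous_map_compose_top_of_set) (auto intro!: continuous_intros)
  obtain K where K: "continuous_map (top_of_set unit_square) Z K" "\<forall>s\<in>{0..1}. K (s, 0) = z"
    "\<forall>y\<in>unit_square. f (K y) = \<gamma> (snd y)"
    using fibration_lift_square[OF fib _ h, of "\<lambda>_. z"] z fz by auto
  show ?thesis
  proof (intro exI[of _ "\<lambda>t. K (0, t)"] conjI ballI)
    show "pathin Z (\<lambda>t. K (0, t))" unfolding pathin_def
      by (rule continuous_map_compose_top_of_set[OF K(1)]) (auto intro!: continuous_intros)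
  qed (use K in auto)
qed

text \<open>Lift the null-homotopy starting from \<open>g\<close>: the other three sides of the lifted square lie
  in the fibre, and their concatenation is homotopic to \<open>g\<close> across the square.\<close>

lemma fibration_homotopic_into_fibre:
  assumes fib: "fibration Z X f" and g: "pathin Z g"
    and g0: "f (g 0) = star" and g1: "f (g 1) = star"
    and null: "homotopic_rel_ends X (f \<circ> g) (\<lambda>_. star)"
  shows "\<exists>\<eta>. pathin (subtopology Z {z. f z = star}) \<eta> \<and> \<eta> 0 = g 0 \<and> \<eta> 1 = g 1 \<and>
             homotopic_rel_ends Z g \<eta>"
proof -
  obtain h where h: "continuous_map (top_of_set unit_square) X h"
    "\<forall>x\<in>{0..1}. h (0, x) = f (g x)" "\<forall>x\<in>{0..1}. h (1, x) = star"
    "\<forall>t\<in>{0..1}. h (t, 0) = f (g 0) \<and> h (t, 1) = f (g 1)"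
    using null unfolding homotopic_rel_ends_iff by auto
  have h': "continuous_map (top_of_set unit_square) X (\<lambda>y. h (snd y, fst y))"
    by (rule continuous_map_compose_top_of_set[OF h(1)]) (auto intro!: continuous_intros)
  obtain K where K: "continuous_map (top_of_set unit_square) Z K" "\<forall>s\<in>{0..1}. K (s, 0) = g s"
    "\<forall>y\<in>unit_square. f (K y) = h (snd y, fst y)"
    using fibration_lift_square[OF fib g h'] h(2) by auto
  let ?F = "subtopology Z {z. f z = star}"
  have side: "pathin Z (\<lambda>t. K (c, t))" "pathin Z (\<lambda>s. K (s, c))" if "c \<in> {0..1}" for c
    unfolding pathin_def using that
    by (auto intro!: continuous_map_compose_top_of_set[OF K(1)] continuous_intros)
  have left: "pathin ?F (\<lambda>t. K (0, t))" and top: "pathin ?F (\<lambda>s. K (s, 1))"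
    and right: "pathin ?F (\<lambda>t. K (1, t))"
    using side K(3) h(3,4) g0 g1 by (auto simp: pathin_subtopology)
  define \<eta> where "\<eta> = ((\<lambda>t. K (0, t)) #\<^sub>p (\<lambda>s. K (s, 1))) #\<^sub>p reverse_path (\<lambda>t. K (1, t))"
  have "homotopic_rel_ends Z (g #\<^sub>p (\<lambda>t. K (1, t))) ((\<lambda>t. K (0, t)) #\<^sub>p (\<lambda>s. K (s, 1)))"
    by (rule homotopic_rel_ends_cong[OF homotopic_rel_ends_square_boundary[OF K(1)]])
      (use K(2) in \<open>auto simp: pjoin_def\<close>)
  then have "homotopic_rel_ends Z \<eta> g"
    unfolding \<eta>_def using K(2) by (intro homotopic_rel_ends_move_pjoin g side) auto
  moreover have "pathin ?F \<eta>"
    unfolding \<eta>_def by (intro pathin_pjoin pathin_reverse left top right) auto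
  moreover have "\<eta> 0 = g 0" "\<eta> 1 = g 1"
    using K(2) by (simp_all add: \<eta>_def)
  ultimately show ?thesis
    using homotopic_rel_ends_sym by blast
qed

section \<open>The biset of a fibration\<close>

lemma bij_betw_quotients:
  assumes eA: "equiv A R" and eB: "equiv B S"
    and F: "\<And>a. a \<in> A \<Longrightarrow> F a = S``{\<phi> a}" and \<phi>: "\<And>a. a \<in> A \<Longrightarrow> \<phi> a \<in> B"
    and preserves: "\<And>a a'. (a, a') \<in> R \<Longrightarrow> (\<phi> a, \<phi> a') \<in> S"
    and reflects: "\<And>a a'. a \<in> A \<Longrightarrow> a' \<in> A \<Longrightarrow> (\<phi> a, \<phi> a') \<in> S \<Longrightarrow> (a, a') \<in> R"
    and onto: "\<And>b. b \<in> B \<Longrightarrow> \<exists>a\<in>A. (\<phi> a, b) \<in> S"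
  shows "bij_betw (\<lambda>C. \<Union>a\<in>C. F a) (A//R) (B//S)"
proof -
  have resp: "congruent R F"
  proof (rule congruentI)
    fix a a' assume aa': "(a, a') \<in> R"
    then have "a \<in> A" "a' \<in> A" using equiv_type[OF eA] by auto
    then show "F a = F a'" using F equiv_class_eq[OF eB preserves[OF aa']] by simp
  qed
  have image_class: "(\<Union>x\<in>R``{a}. F x) = S``{\<phi> a}" if "a \<in> A" for a
    using UN_equiv_class[OF eA resp that] F[OF that] by simp
  show ?thesis
  proof (rule bij_betw_imageI)
    show "inj_on (\<lambda>C. \<Union>a\<in>C. F a) (A//R)"
    proof (rule inj_onI)
      fix C C' assume C: "C \<in> A//R" "C' \<in> A//R" and eq: "(\<Union>a\<in>C. F a) = (\<Union>a\<in>C'. F a)"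
      show "C = C'"
      proof (rule UN_equiv_class_inject[OF eA resp eq C])
        fix a a' assume "a \<in> A" "a' \<in> A" "F a = F a'"
        then show "(a, a') \<in> R"
          using F reflects eq_equiv_class_iff[OF eB \<phi> \<phi>] by metis
      qed
    qed
    show "(\<lambda>C. \<Union>a\<in>C. F a) ` (A//R) = B//S"
    proof
      show "(\<lambda>C. \<Union>a\<in>C. F a) ` (A//R) \<subseteq> B//S"
        using image_class \<phi> by (auto elim!: quotientE simp: quotientI)
      show "B//S \<subseteq> (\<lambda>C. \<Union>a\<in>C. F a) ` (A//R)"
      proof
        fix C assume "C \<in> B//S"
        then obtain b where b: "b \<in> B" "C = S``{b}" by (rule quotientE)
        then obtain a where a: "a \<in> A" "(\<phi> a, b) \<in> S" using onto by blast
        then have "C = (\<Union>x\<in>R``{a}. F x)" using b image_class equiv_class_eq[OF eB] by simp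
        then show "C \<in> (\<lambda>C. \<Union>a\<in>C. F a) ` (A//R)" using a(1) by (auto intro: quotientI)
      qed
    qed
  qed
qed

lemma equiv_path_htp_rel: "equiv (Bpaths X f dag star) (path_htp_rel X (Bpaths X f dag star))"
  unfolding path_htp_rel_def
  by (rule equivI) (auto simp: refl_on_def sym_def trans_def Bpaths_def
      intro: homotopic_rel_ends_refl homotopic_rel_ends_sym homotopic_rel_ends_trans)

lemma equiv_fib_rel: "equiv (fib_paths Z f dag star) (fib_rel Z f dag star)"
proof (rule equivI)
  let ?F = "subtopology Z {z. f z = star}"
  show "fib_rel Z f dag star \<subseteq> fib_paths Z f dag star \<times> fib_paths Z f dag star"
    unfolding fib_rel_def by auto
  show "refl_on (fib_paths Z f dag star) (fib_rel Z f dag star)"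
  proof (rule refl_onI)
    fix \<beta> assume \<beta>: "\<beta> \<in> fib_paths Z f dag star"
    then have p: "pathin Z \<beta>" and "f (\<beta> 1) = star" unfolding fib_paths_def by auto
    then have "pathin ?F (\<lambda>_. \<beta> 1)"
      using path_finish_in_topspace[OF p] by (simp add: pathin_subtopology)
    moreover have "homotopic_rel_ends Z (\<beta> #\<^sub>p (\<lambda>_. \<beta> 1)) \<beta>"
      by (rule homotopic_rel_ends_pjoin_const[OF p]) simp
    ultimately show "(\<beta>, \<beta>) \<in> fib_rel Z f dag star"
      using \<beta> unfolding fib_rel_def by (auto intro!: exI[of _ "\<lambda>_. \<beta> 1"])
  qed
  show "sym (fib_rel Z f dag star)"
  proof (rule symI)
    fix \<beta> \<beta>' assume "(\<beta>, \<beta>') \<in> fib_rel Z f dag star"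
    then obtain \<epsilon> where \<beta>: "\<beta> \<in> fib_paths Z f dag star" "\<beta>' \<in> fib_paths Z f dag star"
      and \<epsilon>: "pathin ?F \<epsilon>" "\<epsilon> 0 = \<beta> 1" "\<epsilon> 1 = \<beta>' 1"
      and H: "homotopic_rel_ends Z (\<beta> #\<^sub>p \<epsilon>) \<beta>'"
      unfolding fib_rel_def by auto
    have "homotopic_rel_ends Z (\<beta>' #\<^sub>p reverse_path \<epsilon>) \<beta>"
      using \<beta> \<epsilon> by (intro homotopic_rel_ends_move_pjoin[OF H])
        (auto simp: fib_paths_def pathin_subtopology)
    then show "(\<beta>', \<beta>) \<in> fib_rel Z f dag star"
      using \<beta> \<epsilon> pathin_reverse[OF \<epsilon>(1)] unfolding fib_rel_def by auto
  qed
  show "trans (fib_rel Z f dag star)"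
  proof (rule transI)
    fix \<beta> \<beta>' \<beta>''
    assume "(\<beta>, \<beta>') \<in> fib_rel Z f dag star" "(\<beta>', \<beta>'') \<in> fib_rel Z f dag star"
    then obtain \<epsilon> \<epsilon>' where \<beta>: "\<beta> \<in> fib_paths Z f dag star" "\<beta>'' \<in> fib_paths Z f dag star"
      and \<epsilon>: "pathin ?F \<epsilon>" "\<epsilon> 0 = \<beta> 1" "\<epsilon> 1 = \<beta>' 1"
      and \<epsilon>': "pathin ?F \<epsilon>'" "\<epsilon>' 0 = \<beta>' 1" "\<epsilon>' 1 = \<beta>'' 1"
      and H: "homotopic_rel_ends Z (\<beta> #\<^sub>p \<epsilon>) \<beta>'" and H': "homotopic_rel_ends Z (\<beta>' #\<^sub>p \<epsilon>') \<beta>''"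
      unfolding fib_rel_def by auto
    have "homotopic_rel_ends Z (\<beta> #\<^sub>p (\<epsilon> #\<^sub>p \<epsilon>')) \<beta>''"
      using \<beta> \<epsilon> \<epsilon>' by (intro homotopic_rel_ends_pjoin_pjoin_trans[OF H H'])
        (auto simp: fib_paths_def pathin_subtopology)
    moreover have "pathin ?F (\<epsilon> #\<^sub>p \<epsilon>')"
      using \<epsilon> \<epsilon>' by (intro pathin_pjoin) auto
    ultimately show "(\<beta>, \<beta>'') \<in> fib_rel Z f dag star"
      using \<beta> \<epsilon> \<epsilon>' unfolding fib_rel_def by auto
  qed
qed

lemma fib_rel_imp_path_htp_rel:
  assumes f: "continuous_map Z X f" and R: "(\<beta>, \<beta>') \<in> fib_rel Z f dag star"
  shows "(f \<circ> \<beta>, f \<circ> \<beta>') \<in> path_htp_rel X (Bpaths X f dag star)"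
proof -
  obtain \<epsilon> where \<beta>: "\<beta> \<in> fib_paths Z f dag star" "\<beta>' \<in> fib_paths Z f dag star"
    and \<epsilon>: "pathin (subtopology Z {z. f z = star}) \<epsilon>" "\<epsilon> 0 = \<beta> 1"
    and H: "homotopic_rel_ends Z (\<beta> #\<^sub>p \<epsilon>) \<beta>'"
    using R unfolding fib_rel_def by auto
  have p: "pathin Z \<beta>" "f (\<beta> 1) = star" using \<beta> unfolding fib_paths_def by auto
  have "homotopic_rel_ends X (f \<circ> \<beta>) ((f \<circ> \<beta>) #\<^sub>p (f \<circ> \<epsilon>))"
    using \<epsilon> p
    by (intro homotopic_rel_ends_sym[OF homotopic_rel_ends_pjoin_const] pathin_compose[OF _ f])
      (auto simp: pathin_subtopology)
  also have "homotopic_rel_ends X \<dots> (f \<circ> \<beta>')"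
    using homotopic_rel_ends_compose[OF H f] by (simp add: pjoin_compose)
  finally show ?thesis
    using \<beta> pathin_compose[OF _ f] unfolding path_htp_rel_def Bpaths_def fib_paths_def by auto
qed

lemma path_htp_rel_imp_fib_rel:
  assumes fib: "fibration Z X f"
    and \<beta>: "\<beta> \<in> fib_paths Z f dag star" and \<beta>': "\<beta>' \<in> fib_paths Z f dag star"
    and R: "(f \<circ> \<beta>, f \<circ> \<beta>') \<in> path_htp_rel X (Bpaths X f dag star)"
  shows "(\<beta>, \<beta>') \<in> fib_rel Z f dag star"
proof -
  have f: "continuous_map Z X f" using fib unfolding fibration_def by blast
  have H: "homotopic_rel_ends X (f \<circ> \<beta>) (f \<circ> \<beta>')" using R unfolding path_htp_rel_def by auto
  have p: "pathin Z \<beta>" "\<beta> 0 = dag" "f (\<beta> 1) = star"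
    and p': "pathin Z \<beta>'" "\<beta>' 0 = dag" "f (\<beta>' 1) = star"
    using \<beta> \<beta>' unfolding fib_paths_def by auto
  define g where "g = reverse_path \<beta> #\<^sub>p \<beta>'"
  have g: "pathin Z g" unfolding g_def using p p' by (intro pathin_pjoin pathin_reverse) auto
  have fp: "pathin X (f \<circ> \<beta>)" using pathin_compose[OF p(1) f] .
  have "homotopic_rel_ends X (f \<circ> g) (reverse_path (f \<circ> \<beta>) #\<^sub>p (f \<circ> \<beta>))"
    unfolding g_def pjoin_compose
    using homotopic_rel_ends_pjoin[OF homotopic_rel_ends_refl[OF pathin_reverse[OF fp]] homotopic_rel_ends_sym[OF H]] p p'
    by (simp add: o_def)
  also have "homotopic_rel_ends X \<dots> (\<lambda>_. star)"
    using homotopic_rel_ends_reverse_pjoin[OF fp] p by simp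
  finally obtain \<eta> where \<eta>: "pathin (subtopology Z {z. f z = star}) \<eta>" "\<eta> 0 = \<beta> 1" "\<eta> 1 = \<beta>' 1"
    and H\<eta>: "homotopic_rel_ends Z g \<eta>"
    using fibration_homotopic_into_fibre[OF fib g] p p' by (auto simp: g_def)
  have "homotopic_rel_ends Z (\<beta> #\<^sub>p \<eta>) (\<beta> #\<^sub>p g)"
    using homotopic_rel_ends_pjoin[OF homotopic_rel_ends_refl[OF p(1)] homotopic_rel_ends_sym[OF H\<eta>]] \<eta>
    by simp
  also have "homotopic_rel_ends Z \<dots> ((\<beta> #\<^sub>p reverse_path \<beta>) #\<^sub>p \<beta>')"
    unfolding g_def using p p' by (intro homotopic_rel_ends_pjoin_assoc pathin_reverse) auto
  also have "homotopic_rel_ends Z \<dots> ((\<lambda>_. dag) #\<^sub>p \<beta>')"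
    using homotopic_rel_ends_pjoin[OF homotopic_rel_ends_pjoin_reverse[OF p(1)] homotopic_rel_ends_refl[OF p'(1)]] p p'
    by simp
  also have "homotopic_rel_ends Z \<dots> \<beta>'"
    using p' by (intro homotopic_rel_ends_const_pjoin) auto
  finally show ?thesis
    using \<beta> \<beta>' \<eta> unfolding fib_rel_def by auto
qed

lemma fib_paths_onto_Bpaths:
  assumes fib: "fibration Z X f" and dag: "dag \<in> topspace Z" and \<gamma>: "\<gamma> \<in> Bpaths X f dag star"
  shows "\<exists>\<beta>\<in>fib_paths Z f dag star. (f \<circ> \<beta>, \<gamma>) \<in> path_htp_rel X (Bpaths X f dag star)"
proof -
  have f: "continuous_map Z X f" using fib unfolding fibration_def by blast
  have p: "pathin X \<gamma>" "\<gamma> 0 = f dag" "\<gamma> 1 = star" using \<gamma> unfolding Bpaths_def by auto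
  obtain \<beta> where \<beta>: "pathin Z \<beta>" "\<beta> 0 = dag" "\<forall>t\<in>{0..1}. f (\<beta> t) = \<gamma> t"
    using fibration_lift_path[OF fib p(1) dag p(2)[symmetric]] by blast
  have "homotopic_rel_ends X (f \<circ> \<beta>) \<gamma>"
    by (rule homotopic_rel_ends_cong[OF homotopic_rel_ends_refl[OF p(1)]]) (use \<beta>(3) in auto)
  then show ?thesis
    using \<beta> p \<gamma> pathin_compose[OF \<beta>(1) f]
    unfolding fib_paths_def path_htp_rel_def Bpaths_def by (auto intro!: bexI[of _ \<beta>])
qed

lemma bij_betw_fib_paths_biset:
  assumes fib: "fibration Z X f" and dag: "dag \<in> topspace Z"
  shows "bij_betw (\<lambda>C. \<Union>\<beta>\<in>C. path_htp_rel X (Bpaths X f dag star) `` {f \<circ> \<beta>})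
           (fib_paths Z f dag star // fib_rel Z f dag star) (biset X f dag star)"
  unfolding biset_def
proof (rule bij_betw_quotients[OF equiv_fib_rel equiv_path_htp_rel])
  have f: "continuous_map Z X f" using fib unfolding fibration_def by blast
  show "f \<circ> \<beta> \<in> Bpaths X f dag star" if "\<beta> \<in> fib_paths Z f dag star" for \<beta>
    using that pathin_compose[OF _ f] unfolding fib_paths_def Bpaths_def by auto
  show "(f \<circ> \<beta>, f \<circ> \<beta>') \<in> path_htp_rel X (Bpaths X f dag star)"
    if "(\<beta>, \<beta>') \<in> fib_rel Z f dag star" for \<beta> \<beta>'
    by (rule fib_rel_imp_path_htp_rel[OF f that])
  show "(\<beta>, \<beta>') \<in> fib_rel Z f dag star"
    if "\<beta> \<in> fib_paths Z f dag star" "\<beta>' \<in> fib_paths Z f dag star"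
      "(f \<circ> \<beta>, f \<circ> \<beta>') \<in> path_htp_rel X (Bpaths X f dag star)" for \<beta> \<beta>'
    by (rule path_htp_rel_imp_fib_rel[OF fib that])
  show "\<exists>\<beta>\<in>fib_paths Z f dag star. (f \<circ> \<beta>, \<gamma>) \<in> path_htp_rel X (Bpaths X f dag star)"
    if "\<gamma> \<in> Bpaths X f dag star" for \<gamma>
    by (rule fib_paths_onto_Bpaths[OF fib dag that])
qed simp

section \<open>The biset of a correspondence\<close>

lemma triple_rel_iff:
  "((\<delta>, p, \<gamma>), (\<delta>', p', \<gamma>')) \<in> triple_rel Y Z X f i dag star \<longleftrightarrow>
     (\<delta>, p, \<gamma>) \<in> triples Y Z X f i dag star \<and> (\<delta>', p', \<gamma>') \<in> triples Y Z X f i dag star \<and>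
     (\<exists>D P G. continuous_map (top_of_set unit_square) Y D \<and> pathin Z P \<and>
              continuous_map (top_of_set unit_square) X G \<and> P 0 = p \<and> P 1 = p' \<and>
              (\<forall>s\<in>{0..1}. D (s, 0) = \<delta> s \<and> D (s, 1) = \<delta>' s \<and> G (s, 0) = \<gamma> s \<and> G (s, 1) = \<gamma>' s) \<and>
              (\<forall>t\<in>{0..1}. D (0, t) = dag \<and> D (1, t) = i (P t) \<and> G (0, t) = f (P t) \<and> G (1, t) = star))"
  by (simp add: triple_rel_def)

lemma triple_rel_homotopic:
  assumes tr: "(\<delta>, p, \<gamma>) \<in> triples Y Z X f i dag star"
    and H\<delta>: "homotopic_rel_ends Y \<delta> \<delta>'" and H\<gamma>: "homotopic_rel_ends X \<gamma> \<gamma>'"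
  shows "((\<delta>, p, \<gamma>), (\<delta>', p, \<gamma>')) \<in> triple_rel Y Z X f i dag star"
proof -
  obtain h where h: "continuous_map (top_of_set unit_square) Y h"
    "\<forall>x\<in>{0..1}. h (0, x) = \<delta> x" "\<forall>x\<in>{0..1}. h (1, x) = \<delta>' x"
    "\<forall>t\<in>{0..1}. h (t, 0) = \<delta> 0 \<and> h (t, 1) = \<delta> 1"
    using H\<delta> unfolding homotopic_rel_ends_iff by blast
  obtain k where k: "continuous_map (top_of_set unit_square) X k"
    "\<forall>x\<in>{0..1}. k (0, x) = \<gamma> x" "\<forall>x\<in>{0..1}. k (1, x) = \<gamma>' x"
    "\<forall>t\<in>{0..1}. k (t, 0) = \<gamma> 0 \<and> k (t, 1) = \<gamma> 1"
    using H\<gamma> unfolding homotopic_rel_ends_iff by blast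
  have swap: "continuous_map (top_of_set unit_square) W (\<lambda>y. H (snd y, fst y))"
    if "continuous_map (top_of_set unit_square) W H" for W and H :: "real \<times> real \<Rightarrow> 'w"
    by (rule continuous_map_compose_top_of_set[OF that]) (auto intro!: continuous_intros)
  have "(\<delta>', p, \<gamma>') \<in> triples Y Z X f i dag star"
    using tr homotopic_rel_ends_imp_pathin[OF H\<delta>] homotopic_rel_ends_endpoints[OF H\<delta>]
      homotopic_rel_ends_imp_pathin[OF H\<gamma>] homotopic_rel_ends_endpoints[OF H\<gamma>]
    by (auto simp: triples_def)
  then show ?thesis
    unfolding triple_rel_iff using tr h k swap[OF h(1)] swap[OF k(1)]
    by (intro conjI exI[of _ "\<lambda>y. h (snd y, fst y)"] exI[of _ "\<lambda>_. p"] exI[of _ "\<lambda>y. k (snd y, fst y)"])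
      (auto simp: triples_def)
qed

lemma triple_rel_refl:
  assumes "(\<delta>, p, \<gamma>) \<in> triples Y Z X f i dag star"
  shows "((\<delta>, p, \<gamma>), (\<delta>, p, \<gamma>)) \<in> triple_rel Y Z X f i dag star"
  using assms by (intro triple_rel_homotopic homotopic_rel_ends_refl) (auto simp: triples_def)

lemma triple_rel_sym:
  assumes "((\<delta>, p, \<gamma>), (\<delta>', p', \<gamma>')) \<in> triple_rel Y Z X f i dag star"
  shows "((\<delta>', p', \<gamma>'), (\<delta>, p, \<gamma>)) \<in> triple_rel Y Z X f i dag star"
proof -
  obtain D P G where tr: "(\<delta>, p, \<gamma>) \<in> triples Y Z X f i dag star" "(\<delta>', p', \<gamma>') \<in> triples Y Z X f i dag star"
    and c: "continuous_map (top_of_set unit_square) Y D" "pathin Z P" "continuous_map (top_of_set unit_square) X G"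
    and e: "P 0 = p" "P 1 = p'"
    and s: "\<forall>s\<in>{0..1}. D (s, 0) = \<delta> s \<and> D (s, 1) = \<delta>' s \<and> G (s, 0) = \<gamma> s \<and> G (s, 1) = \<gamma>' s"
    and t: "\<forall>t\<in>{0..1}. D (0, t) = dag \<and> D (1, t) = i (P t) \<and> G (0, t) = f (P t) \<and> G (1, t) = star"
    using assms unfolding triple_rel_iff by blast
  have flip: "continuous_map (top_of_set unit_square) W (\<lambda>y. H (fst y, 1 - snd y))"
    if "continuous_map (top_of_set unit_square) W H" for W and H :: "real \<times> real \<Rightarrow> 'w"
    by (rule continuous_map_compose_top_of_set[OF that]) (auto intro!: continuous_intros)
  show ?thesis
    unfolding triple_rel_iff using tr e s t flip[OF c(1)] flip[OF c(3)] pathin_reverse[OF c(2)]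
    by (intro conjI exI[of _ "\<lambda>y. D (fst y, 1 - snd y)"] exI[of _ "reverse_path P"]
        exI[of _ "\<lambda>y. G (fst y, 1 - snd y)"]) auto
qed

lemma triple_rel_trans:
  assumes "((\<delta>, p, \<gamma>), (\<delta>', p', \<gamma>')) \<in> triple_rel Y Z X f i dag star"
    and "((\<delta>', p', \<gamma>'), (\<delta>'', p'', \<gamma>'')) \<in> triple_rel Y Z X f i dag star"
  shows "((\<delta>, p, \<gamma>), (\<delta>'', p'', \<gamma>'')) \<in> triple_rel Y Z X f i dag star"
proof -
  obtain D1 P1 G1 where tr: "(\<delta>, p, \<gamma>) \<in> triples Y Z X f i dag star"
    and c1: "continuous_map (top_of_set unit_square) Y D1" "pathin Z P1"
      "continuous_map (top_of_set unit_square) X G1"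
    and e1: "P1 0 = p" "P1 1 = p'"
    and s1: "\<forall>s\<in>{0..1}. D1 (s, 0) = \<delta> s \<and> D1 (s, 1) = \<delta>' s \<and> G1 (s, 0) = \<gamma> s \<and> G1 (s, 1) = \<gamma>' s"
    and t1: "\<forall>t\<in>{0..1}. D1 (0, t) = dag \<and> D1 (1, t) = i (P1 t) \<and> G1 (0, t) = f (P1 t) \<and> G1 (1, t) = star"
    using assms(1) unfolding triple_rel_iff by blast
  obtain D2 P2 G2 where tr'': "(\<delta>'', p'', \<gamma>'') \<in> triples Y Z X f i dag star"
    and c2: "continuous_map (top_of_set unit_square) Y D2" "pathin Z P2"
      "continuous_map (top_of_set unit_square) X G2"
    and e2: "P2 0 = p'" "P2 1 = p''"
    and s2: "\<forall>s\<in>{0..1}. D2 (s, 0) = \<delta>' s \<and> D2 (s, 1) = \<delta>'' s \<and> G2 (s, 0) = \<gamma>' s \<and> G2 (s, 1) = \<gamma>'' s"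
    and t2: "\<forall>t\<in>{0..1}. D2 (0, t) = dag \<and> D2 (1, t) = i (P2 t) \<and> G2 (0, t) = f (P2 t) \<and> G2 (1, t) = star"
    using assms(2) unfolding triple_rel_iff by blast
  let ?D = "\<lambda>y. if snd y \<le> 1/2 then D1 (fst y, 2 * snd y) else D2 (fst y, 2 * snd y - 1)"
  let ?G = "\<lambda>y. if snd y \<le> 1/2 then G1 (fst y, 2 * snd y) else G2 (fst y, 2 * snd y - 1)"
  have cD: "continuous_map (top_of_set unit_square) Y ?D"
    by (rule continuous_map_square_stack[OF c1(1) c2(1)]) (use s1 s2 in auto)
  have cG: "continuous_map (top_of_set unit_square) X ?G"
    by (rule continuous_map_square_stack[OF c1(3) c2(3)]) (use s1 s2 in auto)
  have cP: "pathin Z (P1 #\<^sub>p P2)" by (rule pathin_pjoin[OF c1(2) c2(2)]) (simp add: e1 e2)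
  have t: "?D (0, t) = dag \<and> ?D (1, t) = i ((P1 #\<^sub>p P2) t) \<and> ?G (0, t) = f ((P1 #\<^sub>p P2) t) \<and> ?G (1, t) = star"
    if "t \<in> {0..1}" for t
    using that t1[rule_format, of "2 * t"] t2[rule_format, of "2 * t - 1"] by (auto simp: pjoin_def)
  show ?thesis
    unfolding triple_rel_iff using tr tr'' cD cG cP e1 e2 s1 s2 t
    by (intro conjI exI[of _ ?D] exI[of _ "P1 #\<^sub>p P2"] exI[of _ ?G]) auto
qed

lemma equiv_triple_rel: "equiv (triples Y Z X f i dag star) (triple_rel Y Z X f i dag star)"
proof (rule equivI)
  show "triple_rel Y Z X f i dag star \<subseteq> triples Y Z X f i dag star \<times> triples Y Z X f i dag star"
    unfolding triple_rel_def by auto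
  show "refl_on (triples Y Z X f i dag star) (triple_rel Y Z X f i dag star)"
    unfolding refl_on_def using triple_rel_refl by (metis prod_cases3)
  show "sym (triple_rel Y Z X f i dag star)"
    unfolding sym_def using triple_rel_sym by (metis prod_cases3)
  show "trans (triple_rel Y Z X f i dag star)"
    unfolding trans_def using triple_rel_trans by (metis prod_cases3)
qed

text \<open>Sliding the middle point along \<open>\<epsilon>\<close>: at time \<open>t\<close> the first path is the initial segment of
  \<open>\<delta> #\<^sub>p (i \<circ> \<epsilon>)\<close> of length \<open>(1 + t)/2\<close>, the last one the final segment of
  \<open>reverse_path (f \<circ> \<epsilon>) #\<^sub>p \<gamma>\<close> of the same length.\<close>

lemma triple_rel_slide:
  assumes i: "continuous_map Z Y i" and f: "continuous_map Z X f"
    and tr: "(\<delta>, p, \<gamma>) \<in> triples Y Z X f i dag star"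
    and \<epsilon>: "pathin Z \<epsilon>" "\<epsilon> 0 = p"
  shows "((\<delta>, p, \<gamma>), (\<delta> #\<^sub>p (i \<circ> \<epsilon>), \<epsilon> 1, reverse_path (f \<circ> \<epsilon>) #\<^sub>p \<gamma>))
           \<in> triple_rel Y Z X f i dag star"
proof -
  have a: "p \<in> topspace Z" "pathin Y \<delta>" "\<delta> 0 = dag" "\<delta> 1 = i p" "pathin X \<gamma>" "\<gamma> 0 = f p" "\<gamma> 1 = star"
    using tr by (auto simp: triples_def)
  define \<rho> where "\<rho> = \<delta> #\<^sub>p (i \<circ> \<epsilon>)"
  define \<sigma> where "\<sigma> = reverse_path (f \<circ> \<epsilon>) #\<^sub>p \<gamma>"
  have \<rho>: "pathin Y \<rho>" unfolding \<rho>_def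
    using a \<epsilon> by (intro pathin_pjoin pathin_compose[OF _ i]) auto
  have \<sigma>: "pathin X \<sigma>" unfolding \<sigma>_def
    using a \<epsilon> by (intro pathin_pjoin pathin_reverse pathin_compose[OF _ f]) (auto simp: o_def)
  have tr': "(\<rho>, \<epsilon> 1, \<sigma>) \<in> triples Y Z X f i dag star"
    using path_finish_in_topspace[OF \<epsilon>(1)] \<rho> \<sigma> a by (simp add: triples_def \<rho>_def \<sigma>_def)
  have window: "s * (1 + t) / 2 \<in> {0..1}" "(1 - t) / 2 + s * (1 + t) / 2 \<in> {0..1}"
    if "(s, t) \<in> unit_square" for s t :: real
  proof -
    define u where "u = s * (1 + t)"
    have "0 \<le> u" "u \<le> 1 + t" "0 \<le> t" "t \<le> 1"
      using that by (auto simp: u_def intro: mult_left_le_one_le)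
    then show "s * (1 + t) / 2 \<in> {0..1}" "(1 - t) / 2 + s * (1 + t) / 2 \<in> {0..1}"
      unfolding u_def[symmetric] by (auto simp: field_simps)
  qed
  let ?D = "\<lambda>y. \<rho> (fst y * (1 + snd y) / 2)"
  let ?G = "\<lambda>y. \<sigma> ((1 - snd y) / 2 + fst y * (1 + snd y) / 2)"
  have cD: "continuous_map (top_of_set unit_square) Y ?D"
    using \<rho> unfolding pathin_def
    by (rule continuous_map_compose_top_of_set) (auto intro!: continuous_intros window)
  have cG: "continuous_map (top_of_set unit_square) X ?G"
    using \<sigma> unfolding pathin_def
    by (rule continuous_map_compose_top_of_set) (auto intro!: continuous_intros window)
  have s: "?D (s, 0) = \<delta> s \<and> ?D (s, 1) = \<rho> s \<and> ?G (s, 0) = \<gamma> s \<and> ?G (s, 1) = \<sigma> s"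
    if "s \<in> {0..1}" for s
    using that a \<epsilon> by (auto simp: \<rho>_def \<sigma>_def pjoin_def field_simps)
  have t: "?D (0, t) = dag \<and> ?D (1, t) = i (\<epsilon> t) \<and> ?G (0, t) = f (\<epsilon> t) \<and> ?G (1, t) = star"
    if "t \<in> {0..1}" for t
    using that a \<epsilon> by (auto simp: \<rho>_def \<sigma>_def pjoin_def field_simps)
  show ?thesis
    unfolding triple_rel_iff \<rho>_def[symmetric] \<sigma>_def[symmetric]
    using tr tr' cD cG \<epsilon> s t by (intro conjI exI[of _ ?D] exI[of _ \<epsilon>] exI[of _ ?G]) auto
qed

lemma equiv_red_rel:
  assumes i: "continuous_map Z Y i"
  shows "equiv (red_pairs Y Z f i dag star) (red_rel Y Z f i dag star)"
proof (rule equivI)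
  let ?F = "subtopology Z {z. f z = star}"
  have i\<epsilon>: "pathin Y (i \<circ> \<epsilon>)" if "pathin ?F \<epsilon>" for \<epsilon>
    using that by (auto simp: pathin_subtopology intro: pathin_compose[OF _ i])
  show "red_rel Y Z f i dag star \<subseteq> red_pairs Y Z f i dag star \<times> red_pairs Y Z f i dag star"
    unfolding red_rel_def by auto
  show "refl_on (red_pairs Y Z f i dag star) (red_rel Y Z f i dag star)"
  proof (rule refl_onI, clarify)
    fix \<delta> p assume dp: "(\<delta>, p) \<in> red_pairs Y Z f i dag star"
    then have "pathin ?F (\<lambda>_. p)" "homotopic_rel_ends Y (\<delta> #\<^sub>p (i \<circ> (\<lambda>_. p))) \<delta>"
      by (auto simp: red_pairs_def pathin_subtopology intro!: homotopic_rel_ends_pjoin_const)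
    then show "((\<delta>, p), (\<delta>, p)) \<in> red_rel Y Z f i dag star"
      using dp unfolding red_rel_def by (auto intro!: exI[of _ "\<lambda>_. p"])
  qed
  show "sym (red_rel Y Z f i dag star)"
  proof (rule symI, clarify)
    fix \<delta> p \<delta>' p' assume "((\<delta>, p), (\<delta>', p')) \<in> red_rel Y Z f i dag star"
    then obtain \<epsilon> where dp: "(\<delta>, p) \<in> red_pairs Y Z f i dag star" "(\<delta>', p') \<in> red_pairs Y Z f i dag star"
      and \<epsilon>: "pathin ?F \<epsilon>" "\<epsilon> 0 = p" "\<epsilon> 1 = p'"
      and H: "homotopic_rel_ends Y (\<delta> #\<^sub>p (i \<circ> \<epsilon>)) \<delta>'"
      unfolding red_rel_def by auto
    have "homotopic_rel_ends Y (\<delta>' #\<^sub>p reverse_path (i \<circ> \<epsilon>)) \<delta>"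
      using dp \<epsilon> i\<epsilon>[OF \<epsilon>(1)] by (intro homotopic_rel_ends_move_pjoin[OF H]) (auto simp: red_pairs_def)
    then show "((\<delta>', p'), (\<delta>, p)) \<in> red_rel Y Z f i dag star"
      using dp \<epsilon> pathin_reverse[OF \<epsilon>(1)] unfolding red_rel_def
      by (auto simp: o_def intro!: exI[of _ "reverse_path \<epsilon>"])
  qed
  show "trans (red_rel Y Z f i dag star)"
  proof (rule transI, clarify)
    fix \<delta> p \<delta>' p' \<delta>'' p''
    assume "((\<delta>, p), (\<delta>', p')) \<in> red_rel Y Z f i dag star" "((\<delta>', p'), (\<delta>'', p'')) \<in> red_rel Y Z f i dag star"
    then obtain \<epsilon> \<epsilon>' where dp: "(\<delta>, p) \<in> red_pairs Y Z f i dag star" "(\<delta>'', p'') \<in> red_pairs Y Z f i dag star"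
      and \<epsilon>: "pathin ?F \<epsilon>" "\<epsilon> 0 = p" "\<epsilon> 1 = p'"
      and \<epsilon>': "pathin ?F \<epsilon>'" "\<epsilon>' 0 = p'" "\<epsilon>' 1 = p''"
      and H: "homotopic_rel_ends Y (\<delta> #\<^sub>p (i \<circ> \<epsilon>)) \<delta>'" and H': "homotopic_rel_ends Y (\<delta>' #\<^sub>p (i \<circ> \<epsilon>')) \<delta>''"
      unfolding red_rel_def by auto
    have "homotopic_rel_ends Y (\<delta> #\<^sub>p (i \<circ> (\<epsilon> #\<^sub>p \<epsilon>'))) \<delta>''"
      unfolding pjoin_compose using dp \<epsilon> \<epsilon>' i\<epsilon>[OF \<epsilon>(1)] i\<epsilon>[OF \<epsilon>'(1)]
      by (intro homotopic_rel_ends_pjoin_pjoin_trans[OF H H']) (auto simp: red_pairs_def)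
    moreover have "pathin ?F (\<epsilon> #\<^sub>p \<epsilon>')"
      using \<epsilon> \<epsilon>' by (intro pathin_pjoin) auto
    ultimately show "((\<delta>, p), (\<delta>'', p'')) \<in> red_rel Y Z f i dag star"
      using dp \<epsilon> \<epsilon>' unfolding red_rel_def by auto
  qed
qed

lemma red_rel_imp_triple_rel:
  assumes i: "continuous_map Z Y i" and f: "continuous_map Z X f" and star: "star \<in> topspace X"
    and R: "((\<delta>, p), (\<delta>', p')) \<in> red_rel Y Z f i dag star"
  shows "((\<delta>, p, \<lambda>_. star), (\<delta>', p', \<lambda>_. star)) \<in> triple_rel Y Z X f i dag star"
proof -
  obtain \<epsilon> where dp: "(\<delta>, p) \<in> red_pairs Y Z f i dag star"
    and \<epsilon>: "pathin Z \<epsilon>" "\<epsilon> 0 = p" "\<epsilon> 1 = p'" "\<forall>x\<in>{0..1}. f (\<epsilon> x) = star"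
    and H: "homotopic_rel_ends Y (\<delta> #\<^sub>p (i \<circ> \<epsilon>)) \<delta>'"
    using R unfolding red_rel_def by (auto simp: pathin_subtopology)
  have tr: "(\<delta>, p, \<lambda>_. star) \<in> triples Y Z X f i dag star"
    using dp star by (auto simp: red_pairs_def triples_def)
  have slide: "((\<delta>, p, \<lambda>_. star), (\<delta> #\<^sub>p (i \<circ> \<epsilon>), p', reverse_path (f \<circ> \<epsilon>) #\<^sub>p (\<lambda>_. star)))
                 \<in> triple_rel Y Z X f i dag star"
    using triple_rel_slide[OF i f tr \<epsilon>(1,2)] \<epsilon>(3) by simp
  have "homotopic_rel_ends X (reverse_path (f \<circ> \<epsilon>) #\<^sub>p (\<lambda>_. star)) (\<lambda>_. star)"
    using star \<epsilon>(4) by (intro homotopic_rel_ends_cong[OF homotopic_rel_ends_refl[of X "\<lambda>_. star"]])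
      (auto simp: pjoin_def)
  with slide have "((\<delta> #\<^sub>p (i \<circ> \<epsilon>), p', reverse_path (f \<circ> \<epsilon>) #\<^sub>p (\<lambda>_. star)), (\<delta>', p', \<lambda>_. star))
                     \<in> triple_rel Y Z X f i dag star"
    by (intro triple_rel_homotopic[OF _ H]) (simp add: triple_rel_iff)
  with slide show ?thesis by (rule triple_rel_trans)
qed

text \<open>The square in \<open>X\<close> has \<open>f \<circ> P\<close> on one side and constant paths on the others, so the
  track \<open>P\<close> of the middle point can be pushed into the fibre; the square in \<open>Y\<close> then relates
  \<open>\<delta> #\<^sub>p (i \<circ> P)\<close> to \<open>\<delta>'\<close>.\<close>

lemma triple_rel_imp_red_rel:
  assumes fib: "fibration Z X f" and i: "continuous_map Z Y i"
    and dp: "(\<delta>, p) \<in> red_pairs Y Z f i dag star" and dp': "(\<delta>', p') \<in> red_pairs Y Z f i dag star"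
    and T: "((\<delta>, p, \<lambda>_. star), (\<delta>', p', \<lambda>_. star)) \<in> triple_rel Y Z X f i dag star"
  shows "((\<delta>, p), (\<delta>', p')) \<in> red_rel Y Z f i dag star"
proof -
  have a: "pathin Y \<delta>" "\<delta> 1 = i p" "f p = star" and a': "pathin Y \<delta>'" "\<delta>' 0 = dag" "f p' = star"
    using dp dp' by (auto simp: red_pairs_def)
  obtain D P G where D: "continuous_map (top_of_set unit_square) Y D"
    and P: "pathin Z P" "P 0 = p" "P 1 = p'" and G: "continuous_map (top_of_set unit_square) X G"
    and s: "\<forall>s\<in>{0..1}. D (s, 0) = \<delta> s \<and> D (s, 1) = \<delta>' s \<and> G (s, 0) = star \<and> G (s, 1) = star"
    and t: "\<forall>t\<in>{0..1}. D (0, t) = dag \<and> D (1, t) = i (P t) \<and> G (0, t) = f (P t) \<and> G (1, t) = star"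
    using T unfolding triple_rel_iff by blast
  have f: "continuous_map Z X f" using fib unfolding fibration_def by blast
  have const: "pathin X (\<lambda>_. star)"
    using dp a continuous_map_image_subset_topspace[OF f] by (auto simp: red_pairs_def)
  have "homotopic_rel_ends X (f \<circ> P) ((f \<circ> P) #\<^sub>p (\<lambda>_. star))"
    using P a a' by (intro homotopic_rel_ends_sym[OF homotopic_rel_ends_pjoin_const] pathin_compose[OF _ f])
      auto
  also have "homotopic_rel_ends X \<dots> ((\<lambda>_. star) #\<^sub>p (\<lambda>_. star))"
    by (rule homotopic_rel_ends_sym, rule homotopic_rel_ends_cong[OF homotopic_rel_ends_square_boundary[OF G]])
      (use s t in \<open>auto simp: pjoin_def\<close>)
  also have "homotopic_rel_ends X \<dots> (\<lambda>_. star)"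
    using const by (rule homotopic_rel_ends_pjoin_const) simp
  finally obtain \<eta> where \<eta>: "pathin (subtopology Z {z. f z = star}) \<eta>" "\<eta> 0 = p" "\<eta> 1 = p'"
    and H\<eta>: "homotopic_rel_ends Z P \<eta>"
    using fibration_homotopic_into_fibre[OF fib P(1)] P a a' by auto
  have "homotopic_rel_ends Y (\<delta> #\<^sub>p (i \<circ> \<eta>)) (\<delta> #\<^sub>p (i \<circ> P))"
    using homotopic_rel_ends_pjoin[OF homotopic_rel_ends_refl[OF a(1)]
        homotopic_rel_ends_compose[OF homotopic_rel_ends_sym[OF H\<eta>] i]] \<eta> a by simp
  also have "homotopic_rel_ends Y \<dots> ((\<lambda>_. dag) #\<^sub>p \<delta>')"
    by (rule homotopic_rel_ends_cong[OF homotopic_rel_ends_square_boundary[OF D]])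
      (use s t in \<open>auto simp: pjoin_def\<close>)
  also have "homotopic_rel_ends Y \<dots> \<delta>'"
    using a' by (intro homotopic_rel_ends_const_pjoin) auto
  finally show ?thesis
    using dp dp' \<eta> unfolding red_rel_def by auto
qed

lemma triples_onto_red_pairs:
  assumes fib: "fibration Z X f" and i: "continuous_map Z Y i"
    and tr: "(\<delta>, p, \<gamma>) \<in> triples Y Z X f i dag star"
  obtains \<delta>\<^sub>0 p\<^sub>0 where "(\<delta>\<^sub>0, p\<^sub>0) \<in> red_pairs Y Z f i dag star"
    and "((\<delta>\<^sub>0, p\<^sub>0, \<lambda>_. star), (\<delta>, p, \<gamma>)) \<in> triple_rel Y Z X f i dag star"
proof -
  have f: "continuous_map Z X f" using fib unfolding fibration_def by blast
  have a: "p \<in> topspace Z" "pathin X \<gamma>" "\<gamma> 0 = f p" "\<gamma> 1 = star"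
    using tr by (auto simp: triples_def)
  obtain \<epsilon> where \<epsilon>: "pathin Z \<epsilon>" "\<epsilon> 0 = p" "\<forall>t\<in>{0..1}. f (\<epsilon> t) = \<gamma> t"
    using fibration_lift_path[OF fib a(2,1) a(3)[symmetric]] by blast
  have slide: "((\<delta>, p, \<gamma>), (\<delta> #\<^sub>p (i \<circ> \<epsilon>), \<epsilon> 1, reverse_path (f \<circ> \<epsilon>) #\<^sub>p \<gamma>))
                 \<in> triple_rel Y Z X f i dag star"
    by (rule triple_rel_slide[OF i f tr \<epsilon>(1,2)])
  have "homotopic_rel_ends X (reverse_path (f \<circ> \<epsilon>) #\<^sub>p \<gamma>) (\<lambda>_. star)"
    using \<epsilon>(3) a(4)
    by (intro homotopic_rel_ends_cong[OF homotopic_rel_ends_reverse_pjoin[OF a(2)]]) (auto simp: pjoin_def)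
  with slide have "((\<delta> #\<^sub>p (i \<circ> \<epsilon>), \<epsilon> 1, reverse_path (f \<circ> \<epsilon>) #\<^sub>p \<gamma>), (\<delta> #\<^sub>p (i \<circ> \<epsilon>), \<epsilon> 1, \<lambda>_. star))
                     \<in> triple_rel Y Z X f i dag star"
    by (intro triple_rel_homotopic homotopic_rel_ends_refl) (auto simp: triple_rel_iff triples_def)
  moreover from this have "(\<delta> #\<^sub>p (i \<circ> \<epsilon>), \<epsilon> 1) \<in> red_pairs Y Z f i dag star"
    using \<epsilon>(3) a(4) by (auto simp: triple_rel_iff triples_def red_pairs_def)
  ultimately show ?thesis
    using triple_rel_sym[OF triple_rel_trans[OF slide]] that by blast
qed

lemma bij_betw_red_pairs_biset_corr:
  assumes fib: "fibration Z X f" and i: "continuous_map Z Y i" and star: "star \<in> topspace X"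
  shows "bij_betw (\<lambda>C. \<Union>(\<delta>, p)\<in>C. triple_rel Y Z X f i dag star `` {(\<delta>, p, \<lambda>_. star)})
           (red_pairs Y Z f i dag star // red_rel Y Z f i dag star) (biset_corr Y Z X f i dag star)"
  unfolding biset_corr_def
proof (rule bij_betw_quotients[OF equiv_red_rel[OF i] equiv_triple_rel, where \<phi>="\<lambda>(\<delta>, p). (\<delta>, p, \<lambda>_. star)"])
  have f: "continuous_map Z X f" using fib unfolding fibration_def by blast
  show "(\<lambda>(\<delta>, p). (\<delta>, p, \<lambda>_. star)) a \<in> triples Y Z X f i dag star"
    if "a \<in> red_pairs Y Z f i dag star" for a
    using that star by (auto simp: red_pairs_def triples_def)
  show "((\<lambda>(\<delta>, p). (\<delta>, p, \<lambda>_. star)) a, (\<lambda>(\<delta>, p). (\<delta>, p, \<lambda>_. star)) a') \<in> triple_rel Y Z X f i dag star"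
    if "(a, a') \<in> red_rel Y Z f i dag star" for a a'
    using that red_rel_imp_triple_rel[OF i f star] by (cases a; cases a') auto
  show "(a, a') \<in> red_rel Y Z f i dag star"
    if "a \<in> red_pairs Y Z f i dag star" "a' \<in> red_pairs Y Z f i dag star"
      "((\<lambda>(\<delta>, p). (\<delta>, p, \<lambda>_. star)) a, (\<lambda>(\<delta>, p). (\<delta>, p, \<lambda>_. star)) a') \<in> triple_rel Y Z X f i dag star"
    for a a'
    using that triple_rel_imp_red_rel[OF fib i] by (cases a; cases a') auto
  show "\<exists>a\<in>red_pairs Y Z f i dag star. ((\<lambda>(\<delta>, p). (\<delta>, p, \<lambda>_. star)) a, b) \<in> triple_rel Y Z X f i dag star"
    if "b \<in> triples Y Z X f i dag star" for b
    using that by (cases b) (auto elim!: triples_onto_red_pairs[OF fib i] intro!: bexI)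
qed auto

theorem mainTheorem15:
  fixes Z :: "'z topology" and X :: "'x topology" and Y :: "'y topology"
    and f :: "'z \<Rightarrow> 'x" and i :: "'z \<Rightarrow> 'y" and star :: 'x
  assumes fib: "fibration Z X f"
    and cont_i: "continuous_map Z Y i"
    and star: "star \<in> topspace X"
  shows
   "(\<forall>dag \<in> topspace Z.
       equiv (fib_paths Z f dag star) (fib_rel Z f dag star) \<and>
       bij_betw
         (\<lambda>C. \<Union>\<beta>\<in>C. path_htp_rel X (Bpaths X f dag star) `` {f \<circ> \<beta>})
         (fib_paths Z f dag star // fib_rel Z f dag star)
         (biset X f dag star))
    \<and>
    (\<forall>dag \<in> topspace Y.
       equiv (red_pairs Y Z f i dag star) (red_rel Y Z f i dag star) \<and>
       bij_betw
         (\<lambda>C. \<Union>(\<delta>, p)\<in>C. triple_rel Y Z X f i dag star `` {(\<delta>, p, \<lambda>_. star)})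
         (red_pairs Y Z f i dag star // red_rel Y Z f i dag star)
         (biset_corr Y Z X f i dag star))"
proof (intro conjI ballI)
  show "equiv (fib_paths Z f dag star) (fib_rel Z f dag star)" for dag
    by (rule equiv_fib_rel)
  show "bij_betw (\<lambda>C. \<Union>\<beta>\<in>C. path_htp_rel X (Bpaths X f dag star) `` {f \<circ> \<beta>})
      (fib_paths Z f dag star // fib_rel Z f dag star) (biset X f dag star)"
    if "dag \<in> topspace Z" for dag
    by (rule bij_betw_fib_paths_biset[OF fib that])
  show "equiv (red_pairs Y Z f i dag star) (red_rel Y Z f i dag star)" for dag
    by (rule equiv_red_rel[OF cont_i])
  show "bij_betw (\<lambda>C. \<Union>(\<delta>, p)\<in>C. triple_rel Y Z X f i dag star `` {(\<delta>, p, \<lambda>_. star)})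
      (red_pairs Y Z f i dag star // red_rel Y Z f i dag star) (biset_corr Y Z X f i dag star)" for dag
    by (rule bij_betw_red_pairs_biset_corr[OF fib cont_i star])
qed

end
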